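(* Let $W$ be an affine Weyl group and $x\in W$. Let $r_1,r_2$ be reflections in $W$ whose hyperplanes $H_1=H_{r_1}$, $H_2=H_{r_2}$ are parallel. Suppose $j\in D_R(x)$. Let $H_3$ be the hyperplane of the reflection $xs_jx^{-1}$ (the wall separating $x$ from $xs_j$) and $H_4$ the hyperplane of the reflection $r_2r_1xs_jx^{-1}r_1r_2$. Assume that the identity alcove does not lie in the region strictly between $H_3$ and $H_4$. Then $j\in D_R(r_2r_1x)$.
   Context: $W$ is the affine Weyl group of a crystallographic root system, a Coxeter group with simple generators $s_j$, acting on Euclidean space; its reflections are the reflections in the hyperplanes $H_{\beta,k}=\{v:\langle v,\beta\rangle=k\}$, and $H_r$ is the hyperplane of the reflection $r$. Elements of $W$ are identified with alcoves ($w\mapsto wA_0$, the identity alcove being $A_0$). $\ell$ is length; $D_R(x)=\{j:\ell(xs_j)<\ell(x)\}$. *)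

theory Defs
  imports "HOL-Analysis.Analysis"
begin

definition root_system :: "'a::euclidean_space set \<Rightarrow> bool" where
  "root_system \<Phi> \<longleftrightarrow> finite \<Phi> \<and> 0 \<notin> \<Phi> \<and> span \<Phi> = UNIV
     \<and> (\<forall>\<alpha>\<in>\<Phi>. \<forall>\<beta>\<in>\<Phi>. \<beta> - (2 * (\<beta> \<bullet> \<alpha>) / (\<alpha> \<bullet> \<alpha>)) *\<^sub>R \<alpha> \<in> \<Phi>)
     \<and> (\<forall>\<alpha>\<in>\<Phi>. \<forall>\<beta>\<in>\<Phi>. 2 * (\<beta> \<bullet> \<alpha>) / (\<alpha> \<bullet> \<alpha>) \<in> \<int>)
     \<and> (\<forall>\<alpha>\<in>\<Phi>. \<forall>c::real. c *\<^sub>R \<alpha> \<in> \<Phi> \<longrightarrow> c = 1 \<or> c = -1)"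

definition aff_refl :: "'a::euclidean_space \<Rightarrow> int \<Rightarrow> 'a \<Rightarrow> 'a" where
  "aff_refl \<beta> k v = v - ((v \<bullet> \<beta> - of_int k) * (2 / (\<beta> \<bullet> \<beta>))) *\<^sub>R \<beta>"

definition refls :: "'a::euclidean_space set \<Rightarrow> ('a \<Rightarrow> 'a) set" where
  "refls \<Phi> = {aff_refl \<beta> k | \<beta> k. \<beta> \<in> \<Phi>}"

inductive_set affW :: "'a::euclidean_space set \<Rightarrow> ('a \<Rightarrow> 'a) set" for \<Phi> where
  affW_id: "id \<in> affW \<Phi>"
| affW_step: "r \<in> refls \<Phi> \<Longrightarrow> w \<in> affW \<Phi> \<Longrightarrow> r \<circ> w \<in> affW \<Phi>"

definition hyps :: "'a::euclidean_space set \<Rightarrow> 'a set set" where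
  "hyps \<Phi> = {{v. v \<bullet> \<beta> = of_int k} | \<beta> k. \<beta> \<in> \<Phi>}"

definition alcove :: "'a::euclidean_space set \<Rightarrow> 'a set \<Rightarrow> bool" where
  "alcove \<Phi> A \<longleftrightarrow> A \<in> components (- \<Union>(hyps \<Phi>))"

definition fixH :: "('a \<Rightarrow> 'a) \<Rightarrow> 'a set" where
  "fixH r = {v. r v = v}"

text \<open>Simple reflections w.r.t. the fundamental alcove A0: reflections in the walls
  (facets) of A0.\<close>
definition simple_refls :: "'a::euclidean_space set \<Rightarrow> 'a set \<Rightarrow> ('a \<Rightarrow> 'a) set" where
  "simple_refls \<Phi> A0 = {r \<in> refls \<Phi>. aff_dim (fixH r \<inter> closure A0) = int DIM('a) - 1}"

definition coxeter_length :: "('a \<Rightarrow> 'a) set \<Rightarrow> ('a \<Rightarrow> 'a) \<Rightarrow> nat" where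
  "coxeter_length S w = (LEAST n. \<exists>ss. length ss = n \<and> set ss \<subseteq> S \<and> w = foldr (\<circ>) ss id)"

definition strictly_between :: "'a::euclidean_space set \<Rightarrow> 'a set \<Rightarrow> 'a set" where
  "strictly_between H H' = {v. \<exists>p\<in>H. \<exists>q\<in>H'. v \<in> open_segment p q} - (H \<union> H')"

end

theory Submission
  imports Defs
begin

(* The proof rests on the geometric description of the length function: for w in W,
   the Coxeter length of w with respect to the reflections in the walls of A0 equals the
   number of hyperplanes of the arrangement separating A0 from w A0.  The simple reflections
   generate W (walk from A0 to any alcove, crossing one wall at a time), and along a reduced
   word every step crosses a new hyperplane, for otherwise two letters cancel (the exchange
   condition).  Consequently j lies in D_R(x) iff the wall H3 = x H_{s_j} separates A0 from x A0.

   Reflections in two parallel hyperplanes compose to a translation T = r2 r1.  Then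
   H4 = T H3 is the corresponding wall of T x A0 = x A0 + d.  As A0 does not lie strictly
   between H3 and H4, it lies on the same side of both, so H4 separates A0 from T x A0,
   i.e. j lies in D_R(r2 r1 x). *)

section \<open>Affine reflections and hyperplanes\<close>

definition hplane :: "'a::euclidean_space \<Rightarrow> real \<Rightarrow> 'a set" where
  "hplane \<beta> k = {v. v \<bullet> \<beta> = k}"

(* Offsets are real, unlike those of aff_refl, so that translates of the hyperplanes
   (translation_hplane) are again of this form. *)
definition reflection :: "'a::euclidean_space \<Rightarrow> real \<Rightarrow> 'a \<Rightarrow> 'a" where
  "reflection \<beta> k v = v - ((v \<bullet> \<beta> - k) * (2 / (\<beta> \<bullet> \<beta>))) *\<^sub>R \<beta>"

lemma aff_refl_eq_reflection: "aff_refl \<beta> k = reflection \<beta> (of_int k)"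
  by (simp add: aff_refl_def reflection_def fun_eq_iff)

lemma inner_reflection: "\<beta> \<noteq> 0 \<Longrightarrow> reflection \<beta> k v \<bullet> \<beta> = 2 * k - v \<bullet> \<beta>"
  by (simp add: reflection_def inner_diff_left field_simps)

lemma reflection_reflection:
  assumes "\<beta> \<noteq> 0"
  shows "reflection \<beta> b (reflection \<beta> a v) = v + ((b - a) * (2 / (\<beta> \<bullet> \<beta>))) *\<^sub>R \<beta>"
proof -
  have "reflection \<beta> b (reflection \<beta> a v)
      = v - ((v \<bullet> \<beta> - a) * (2 / (\<beta> \<bullet> \<beta>)) + (2 * a - v \<bullet> \<beta> - b) * (2 / (\<beta> \<bullet> \<beta>))) *\<^sub>R \<beta>"
    using inner_reflection[OF assms] by (simp add: reflection_def scaleR_add_left)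
  also have "(v \<bullet> \<beta> - a) * (2 / (\<beta> \<bullet> \<beta>)) + (2 * a - v \<bullet> \<beta> - b) * (2 / (\<beta> \<bullet> \<beta>))
      = - ((b - a) * (2 / (\<beta> \<bullet> \<beta>)))"
    using assms by (simp add: field_simps)
  finally show ?thesis by simp
qed

lemma reflection_involution: "\<beta> \<noteq> 0 \<Longrightarrow> reflection \<beta> k (reflection \<beta> k v) = v"
  by (simp add: reflection_reflection)

lemma reflection_fixed_iff: "\<beta> \<noteq> 0 \<Longrightarrow> reflection \<beta> k v = v \<longleftrightarrow> v \<bullet> \<beta> = k"
  by (auto simp: reflection_def)

lemma reflection_scaleR: "c \<noteq> 0 \<Longrightarrow> reflection (c *\<^sub>R \<beta>) (c * k) = reflection \<beta> k"
  by (auto simp: reflection_def fun_eq_iff field_simps)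

lemma reflection_conj:
  assumes \<alpha>: "\<alpha> \<noteq> 0" and \<beta>: "\<beta> \<noteq> 0"
  defines "c \<equiv> 2 * (\<beta> \<bullet> \<alpha>) / (\<alpha> \<bullet> \<alpha>)"
  shows "reflection \<alpha> m (reflection \<beta> k (reflection \<alpha> m v))
       = reflection (\<beta> - c *\<^sub>R \<alpha>) (k - c * m) v"
proof -
  define u where "u = reflection \<alpha> m v"
  define l where "l = (u \<bullet> \<beta> - k) * (2 / (\<beta> \<bullet> \<beta>))"
  have \<alpha>\<alpha>: "\<alpha> \<bullet> \<alpha> \<noteq> 0" using \<alpha> by simp
  have c': "c = (\<beta> \<bullet> \<alpha>) * (2 / (\<alpha> \<bullet> \<alpha>))" by (simp add: c_def)
  have u\<beta>: "u \<bullet> \<beta> - k = v \<bullet> (\<beta> - c *\<^sub>R \<alpha>) - (k - c * m)"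
    using \<alpha>\<alpha> by (simp add: u_def reflection_def c_def inner_diff_left inner_diff_right
        inner_commute field_simps)
  have norm_eq: "(\<beta> - c *\<^sub>R \<alpha>) \<bullet> (\<beta> - c *\<^sub>R \<alpha>) = \<beta> \<bullet> \<beta>"
    using \<alpha>\<alpha> by (simp add: c_def inner_diff_left inner_diff_right inner_commute
        power2_eq_square field_simps)
  have "reflection \<alpha> m (reflection \<beta> k u) = reflection \<alpha> m (u - l *\<^sub>R \<beta>)"
    by (simp add: reflection_def l_def)
  also have "\<dots> = u - l *\<^sub>R \<beta> - ((u \<bullet> \<alpha> - m) * (2 / (\<alpha> \<bullet> \<alpha>)) - l * c) *\<^sub>R \<alpha>"
    using \<alpha>\<alpha> by (simp add: reflection_def c' inner_diff_left field_simps)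
  also have "\<dots> = reflection \<alpha> m u - l *\<^sub>R (\<beta> - c *\<^sub>R \<alpha>)"
    by (simp add: reflection_def scaleR_diff_left scaleR_diff_right)
  also have "reflection \<alpha> m u = v"
    using reflection_involution[OF \<alpha>] by (simp add: u_def)
  also have "l = (v \<bullet> (\<beta> - c *\<^sub>R \<alpha>) - (k - c * m)) * (2 / ((\<beta> - c *\<^sub>R \<alpha>) \<bullet> (\<beta> - c *\<^sub>R \<alpha>)))"
    by (simp add: l_def u\<beta> norm_eq)
  finally show ?thesis
    by (simp add: reflection_def u_def)
qed

lemma fixH_reflection: "\<beta> \<noteq> 0 \<Longrightarrow> fixH (reflection \<beta> k) = hplane \<beta> k"
  by (simp add: fixH_def hplane_def reflection_fixed_iff)

lemma hplane_nonempty: "\<beta> \<noteq> 0 \<Longrightarrow> hplane \<beta> k \<noteq> {}"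
  by (auto simp: hplane_def intro!: exI[of _ "(k / (\<beta> \<bullet> \<beta>)) *\<^sub>R \<beta>"])

lemma affine_hplane: "affine (hplane \<beta> k)"
  using affine_hyperplane[of \<beta> k] by (simp add: hplane_def inner_commute)

lemma aff_dim_hplane: "\<beta> \<noteq> 0 \<Longrightarrow> aff_dim (hplane \<beta> k) = int DIM('a) - 1"
  for \<beta> :: "'a::euclidean_space"
  using aff_dim_hyperplane[of \<beta> k] by (simp add: hplane_def inner_commute)

lemma translation_hplane: "(\<lambda>v. v + d) ` hplane \<eta> e = hplane \<eta> (e + d \<bullet> \<eta>)"
proof (intro equalityI subsetI)
  fix w assume "w \<in> hplane \<eta> (e + d \<bullet> \<eta>)"
  then have "w - d \<in> hplane \<eta> e" by (simp add: hplane_def inner_diff_left)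
  then show "w \<in> (\<lambda>v. v + d) ` hplane \<eta> e" by (auto intro: image_eqI[of _ _ "w - d"])
qed (auto simp: hplane_def inner_add_left)

lemma hplane_eq_imp_parallel:
  assumes \<beta>: "\<beta> \<noteq> 0" and \<gamma>: "\<gamma> \<noteq> 0" and eq: "hplane \<gamma> a = hplane \<beta> b"
  obtains c where "c \<noteq> 0" "\<gamma> = c *\<^sub>R \<beta>" "a = c * b"
proof -
  have \<beta>\<beta>: "\<beta> \<bullet> \<beta> \<noteq> 0" using \<beta> by simp
  define p where "p = (b / (\<beta> \<bullet> \<beta>)) *\<^sub>R \<beta>"
  define c where "c = (\<gamma> \<bullet> \<beta>) / (\<beta> \<bullet> \<beta>)"
  define u where "u = \<gamma> - c *\<^sub>R \<beta>"
  have u\<beta>: "u \<bullet> \<beta> = 0" using \<beta>\<beta> by (simp add: u_def c_def inner_diff_left)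
  have "p \<in> hplane \<beta> b" "p + u \<in> hplane \<beta> b"
    using \<beta>\<beta> u\<beta> by (simp_all add: hplane_def p_def inner_add_left)
  then have p\<gamma>: "p \<bullet> \<gamma> = a" and "(p + u) \<bullet> \<gamma> = a"
    using eq by (simp_all add: hplane_def set_eq_iff)
  then have "u \<bullet> \<gamma> = 0" by (simp add: inner_add_left)
  then have "u \<bullet> u = 0" using u\<beta> by (simp add: u_def inner_diff_right)
  then have \<gamma>c: "\<gamma> = c *\<^sub>R \<beta>" by (simp add: u_def)
  show thesis
  proof
    show "c \<noteq> 0" using \<gamma> \<gamma>c by auto
    show "a = c * b" using p\<gamma> \<gamma>c \<beta>\<beta> by (simp add: p_def)
  qed fact
qed

lemma fixH_conj:
  assumes "bij w"
  shows "fixH (w \<circ> q \<circ> inv w) = w ` fixH q"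
proof -
  have "w (q (inv w v)) = v \<longleftrightarrow> q (inv w v) = inv w v" for v
    using assms by (metis bij_inv_eq_iff)
  moreover have "v = w (inv w v)" for v
    using assms by (metis bij_inv_eq_iff)
  ultimately show ?thesis
    using assms by (auto simp: fixH_def bij_is_inj intro: image_eqI[of _ _ "inv w _"])
qed

definition affine_map :: "('a::euclidean_space \<Rightarrow> 'a) \<Rightarrow> bool" where
  "affine_map w \<longleftrightarrow> (\<exists>L c. linear L \<and> inj L \<and> w = (\<lambda>v. L v + c))"

lemma affine_map_id: "affine_map id"
  unfolding affine_map_def by (intro exI[of _ id] exI[of _ 0]) (auto simp: linear_id)

lemma affine_map_comp: "affine_map f \<Longrightarrow> affine_map g \<Longrightarrow> affine_map (f \<circ> g)"
  unfolding affine_map_def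
proof (elim exE conjE)
  fix L c L' c'
  assume "linear L" "inj L" "f = (\<lambda>v. L v + c)" "linear L'" "inj L'" "g = (\<lambda>v. L' v + c')"
  then show "\<exists>L c. linear L \<and> inj L \<and> f \<circ> g = (\<lambda>v. L v + c)"
    by (intro exI[of _ "L \<circ> L'"] exI[of _ "L c' + c"])
      (auto simp: linear_compose inj_compose fun_eq_iff linear_add)
qed

lemma affine_map_reflection:
  assumes "\<beta> \<noteq> 0"
  shows "affine_map (reflection \<beta> k)"
  unfolding affine_map_def
proof (intro exI conjI)
  define b where "b = (2 / (\<beta> \<bullet> \<beta>)) *\<^sub>R \<beta>"
  have "reflection \<beta> 0 = (\<lambda>v. v - (v \<bullet> \<beta>) *\<^sub>R b)"
    by (simp add: fun_eq_iff reflection_def b_def mult.commute)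
  then show "linear (reflection \<beta> 0)"
    by (auto intro!: linearI simp: inner_add_left scaleR_add_left scaleR_diff_right)
  show "inj (reflection \<beta> 0)" using assms by (metis injI reflection_involution)
  show "reflection \<beta> k = (\<lambda>v. reflection \<beta> 0 v + (k * (2 / (\<beta> \<bullet> \<beta>))) *\<^sub>R \<beta>)"
    by (simp add: fun_eq_iff reflection_def left_diff_distrib diff_divide_distrib scaleR_diff_left)
qed

lemma affine_map_continuous_on:
  assumes "affine_map w"
  shows "continuous_on S w"
proof -
  obtain L c where L: "linear L" "w = (\<lambda>v. L v + c)" using assms unfolding affine_map_def by blast
  have "continuous_on S L" using L(1) by (simp add: linear_continuous_on linear_linear)
  then show ?thesis unfolding L(2) by (intro continuous_on_add continuous_on_const)
qed

lemma affine_map_closed_segment: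
  assumes "affine_map w"
  shows "w ` closed_segment a b = closed_segment (w a) (w b)"
proof -
  obtain L c where L: "linear L" "w = (\<lambda>v. L v + c)" using assms unfolding affine_map_def by blast
  have "w ` closed_segment a b = (\<lambda>x. c + x) ` L ` closed_segment a b"
    by (auto simp: L image_image add.commute)
  also have "\<dots> = closed_segment (c + L a) (c + L b)"
    by (simp add: closed_segment_linear_image[OF L(1)] closed_segment_translation)
  finally show ?thesis by (simp add: L add.commute)
qed

lemma affine_map_aff_dim: "affine_map w \<Longrightarrow> aff_dim (w ` S) = aff_dim S"
proof -
  assume "affine_map w"
  then obtain L c where L: "linear L" "inj L" "w = (\<lambda>v. L v + c)" unfolding affine_map_def by blast
  then have "w ` S = (+) c ` L ` S" by (auto simp: image_image add.commute)
  then show ?thesis by (simp add: aff_dim_translation_eq L)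
qed

lemma affine_map_closure_image:
  "affine_map w \<Longrightarrow> w ` closure S \<subseteq> closure (w ` S)"
  by (intro image_closure_subset affine_map_continuous_on closed_closure closure_subset)

definition separates :: "'a::euclidean_space set \<Rightarrow> 'a \<Rightarrow> 'a \<Rightarrow> bool" where
  "separates H u v \<longleftrightarrow> u \<notin> H \<and> v \<notin> H \<and> closed_segment u v \<inter> H \<noteq> {}"

lemma separates_hplane_iff:
  assumes u: "u \<notin> hplane \<beta> k" and v: "v \<notin> hplane \<beta> k"
  shows "separates (hplane \<beta> k) u v \<longleftrightarrow> (u \<bullet> \<beta> < k) \<noteq> (v \<bullet> \<beta> < k)"
proof -
  have uv: "u \<bullet> \<beta> \<noteq> k" "v \<bullet> \<beta> \<noteq> k" using u v by (auto simp: hplane_def)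
  have "closed_segment u v \<inter> hplane \<beta> k = {}" if "(u \<bullet> \<beta> < k) = (v \<bullet> \<beta> < k)"
  proof (cases "u \<bullet> \<beta> < k")
    case True
    with that have "closed_segment u v \<subseteq> {x. \<beta> \<bullet> x < k}"
      by (intro closed_segment_subset convex_halfspace_lt) (auto simp: inner_commute)
    then show ?thesis by (auto simp: hplane_def inner_commute)
  next
    case False
    with that uv have "closed_segment u v \<subseteq> {x. \<beta> \<bullet> x > k}"
      by (intro closed_segment_subset convex_halfspace_gt) (auto simp: inner_commute)
    then show ?thesis by (auto simp: hplane_def inner_commute)
  qed
  moreover have "closed_segment u v \<inter> hplane \<beta> k \<noteq> {}" if "(u \<bullet> \<beta> < k) \<noteq> (v \<bullet> \<beta> < k)"
  proof -
    have "connected (closed_segment u v)" by (simp add: convex_connected)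
    then have "\<exists>z\<in>closed_segment u v. \<beta> \<bullet> z = k"
      using that uv connected_ivt_hyperplane[of "closed_segment u v" u v \<beta> k]
        connected_ivt_hyperplane[of "closed_segment u v" v u \<beta> k]
      by (auto simp: inner_commute)
    then show ?thesis by (auto simp: hplane_def inner_commute)
  qed
  ultimately show ?thesis using u v by (auto simp: separates_def)
qed

lemma connected_hplane_side:
  assumes "connected X" and "X \<inter> hplane \<beta> k = {}"
  shows "(\<forall>x\<in>X. x \<bullet> \<beta> < k) \<or> (\<forall>x\<in>X. x \<bullet> \<beta> > k)"
proof (rule ccontr)
  assume "\<not> ?thesis"
  then obtain x y where "x \<in> X" "y \<in> X" "\<not> x \<bullet> \<beta> < k" "\<not> y \<bullet> \<beta> > k" by auto
  then have "\<exists>z\<in>X. \<beta> \<bullet> z = k"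
    using connected_ivt_hyperplane[OF assms(1), of y x \<beta> k] by (auto simp: inner_commute)
  then show False using assms(2) by (auto simp: hplane_def inner_commute)
qed

lemma closure_hplane_side:
  assumes "connected X" and "X \<inter> hplane \<gamma> m = {}" and "x \<in> X" and "f \<in> closure X"
  shows "x \<bullet> \<gamma> < m \<Longrightarrow> f \<bullet> \<gamma> \<le> m" and "x \<bullet> \<gamma> > m \<Longrightarrow> f \<bullet> \<gamma> \<ge> m"
proof -
  note side = connected_hplane_side[OF assms(1,2)]
  show "f \<bullet> \<gamma> \<le> m" if "x \<bullet> \<gamma> < m"
  proof -
    have "X \<subseteq> {y. \<gamma> \<bullet> y \<le> m}" using side that assms(3) by (force simp: inner_commute)
    then have "closure X \<subseteq> {y. \<gamma> \<bullet> y \<le> m}" by (intro closure_minimal closed_halfspace_le)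
    then show ?thesis using assms(4) by (auto simp: inner_commute)
  qed
  show "f \<bullet> \<gamma> \<ge> m" if "x \<bullet> \<gamma> > m"
  proof -
    have "X \<subseteq> {y. \<gamma> \<bullet> y \<ge> m}" using side that assms(3) by (force simp: inner_commute)
    then have "closure X \<subseteq> {y. \<gamma> \<bullet> y \<ge> m}" by (intro closure_minimal closed_halfspace_ge)
    then show ?thesis using assms(4) by (auto simp: inner_commute)
  qed
qed

lemma strictly_between_hplane:
  assumes "\<eta> \<noteq> 0" and "e < v \<bullet> \<eta>" and "v \<bullet> \<eta> < e'"
  shows "v \<in> strictly_between (hplane \<eta> e) (hplane \<eta> e')"
proof -
  have \<eta>\<eta>: "\<eta> \<bullet> \<eta> \<noteq> 0" using assms(1) by simp
  define p where "p = v - ((v \<bullet> \<eta> - e) / (\<eta> \<bullet> \<eta>)) *\<^sub>R \<eta>"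
  define q where "q = v - ((v \<bullet> \<eta> - e') / (\<eta> \<bullet> \<eta>)) *\<^sub>R \<eta>"
  define u where "u = (v \<bullet> \<eta> - e) / (e' - e)"
  have p: "p \<in> hplane \<eta> e" and q: "q \<in> hplane \<eta> e'"
    using \<eta>\<eta> by (simp_all add: p_def q_def hplane_def inner_diff_left)
  have u: "0 < u" "u < 1" using assms by (auto simp: u_def divide_simps)
  have "p \<noteq> q" using p q assms by (auto simp: hplane_def)
  moreover have "v = (1 - u) *\<^sub>R p + u *\<^sub>R q"
  proof -
    define a where "a = (v \<bullet> \<eta> - e) / (\<eta> \<bullet> \<eta>)"
    define a' where "a' = (v \<bullet> \<eta> - e') / (\<eta> \<bullet> \<eta>)"
    have "(1 - u) *\<^sub>R p + u *\<^sub>R q = v - ((1 - u) * a + u * a') *\<^sub>R \<eta>"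
      by (simp add: p_def q_def a_def a'_def algebra_simps)
    also have "(1 - u) * a + u * a' = 0"
      using assms \<eta>\<eta> by (simp add: a_def a'_def u_def field_simps)
    finally show ?thesis by simp
  qed
  ultimately have "v \<in> open_segment p q" using u by (auto simp: in_segment)
  moreover have "v \<notin> hplane \<eta> e \<union> hplane \<eta> e'" using assms by (auto simp: hplane_def)
  ultimately show ?thesis unfolding strictly_between_def using p q by blast
qed

lemma strictly_between_commute: "strictly_between H H' = strictly_between H' H"
proof -
  have "{v. \<exists>p\<in>H. \<exists>q\<in>H'. v \<in> open_segment p q} = {v. \<exists>p\<in>H'. \<exists>q\<in>H. v \<in> open_segment p q}"
    using open_segment_commute by blast
  then show ?thesis by (simp add: strictly_between_def Un_commute)
qed

lemma same_side_if_not_strictly_between: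
  assumes "\<eta> \<noteq> 0" and A: "connected A" "a \<in> A"
    and disj: "A \<inter> hplane \<eta> e = {}" "A \<inter> hplane \<eta> e' = {}"
    and not_between: "\<not> A \<subseteq> strictly_between (hplane \<eta> e) (hplane \<eta> e')"
  shows "a \<bullet> \<eta> < e \<longleftrightarrow> a \<bullet> \<eta> < e'"
proof (rule ccontr)
  assume differ: "(a \<bullet> \<eta> < e) \<noteq> (a \<bullet> \<eta> < e')"
  have "e < v \<bullet> \<eta> \<and> v \<bullet> \<eta> < e' \<or> e' < v \<bullet> \<eta> \<and> v \<bullet> \<eta> < e" if "v \<in> A" for v
    using connected_hplane_side[OF A(1) disj(1)] connected_hplane_side[OF A(1) disj(2)]
      differ that A(2) by (metis less_asym)
  then have "A \<subseteq> strictly_between (hplane \<eta> e) (hplane \<eta> e')"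
    using strictly_between_hplane[OF assms(1)] strictly_between_commute by blast
  then show False using not_between by contradiction
qed

lemma closure_halfspace_Int_ball:
  fixes c :: "'a::euclidean_space"
  assumes "c \<noteq> 0"
  shows "{x. c \<bullet> x = b} \<inter> ball p \<epsilon> \<subseteq> closure (ball p \<epsilon> \<inter> {x. c \<bullet> x > b})"
proof -
  have "closure {x. c \<bullet> x > b} = {x. c \<bullet> x \<ge> b}" using assms by (rule closure_halfspace_gt)
  then have "{x. c \<bullet> x = b} \<inter> ball p \<epsilon> \<subseteq> ball p \<epsilon> \<inter> closure {x. c \<bullet> x > b}" by auto
  also have "\<dots> \<subseteq> closure (ball p \<epsilon> \<inter> {x. c \<bullet> x > b})" by (rule open_Int_closure_subset[OF open_ball])
  finally show ?thesis .
qed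

lemma closed_segment_near_end:
  fixes a p :: "'a::real_normed_vector"
  assumes "a \<noteq> p" and "\<epsilon> > 0"
  obtains q where "q \<in> ball p \<epsilon>" "q \<in> closed_segment a p" "dist a q < dist a p"
proof
  define \<tau> where "\<tau> = min (1/2) (\<epsilon> / (2 * dist a p))"
  have dist: "dist a p > 0" using assms(1) by simp
  then have \<tau>: "0 < \<tau>" "\<tau> \<le> 1/2" "\<tau> * dist a p < \<epsilon>"
    using assms(2) by (auto simp: \<tau>_def min_def field_simps)
  define q where "q = p + \<tau> *\<^sub>R (a - p)"
  have "dist p q = \<tau> * dist a p" using \<tau> by (simp add: q_def dist_norm dist_commute)
  then show "q \<in> ball p \<epsilon>" using \<tau> by simp
  show "q \<in> closed_segment a p"
    unfolding in_segment using \<tau> by (intro exI[of _ "1 - \<tau>"]) (auto simp: q_def algebra_simps)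
  have "a - q = (1 - \<tau>) *\<^sub>R (a - p)" by (simp add: q_def algebra_simps)
  then show "dist a q < dist a p" using \<tau> dist by (simp add: dist_norm)
qed

(* H contains a facet of A; simple_refls asks this of A0 and fixH r. *)
definition wall :: "'a::euclidean_space set \<Rightarrow> 'a set \<Rightarrow> bool" where
  "wall A H \<longleftrightarrow> aff_dim (closure A \<inter> H) = int DIM('a) - 1"

definition comp_list :: "('a \<Rightarrow> 'a) list \<Rightarrow> 'a \<Rightarrow> 'a" where
  "comp_list fs = foldr (\<circ>) fs id"

lemma comp_list_Nil [simp]: "comp_list [] = id"
  and comp_list_Cons [simp]: "comp_list (f # fs) = f \<circ> comp_list fs"
  by (simp_all add: comp_list_def)

lemma comp_list_append: "comp_list (fs @ gs) = comp_list fs \<circ> comp_list gs"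
  by (induction fs) (simp_all add: comp_assoc)

lemma coxeter_length_comp_list:
  "coxeter_length S w = (LEAST n. \<exists>ss. length ss = n \<and> set ss \<subseteq> S \<and> w = comp_list ss)"
  by (simp add: coxeter_length_def comp_list_def)

section \<open>The affine Weyl group\<close>

lemma refls_eq: "refls \<Phi> = {reflection \<beta> (of_int k) | \<beta> k. \<beta> \<in> \<Phi>}"
  by (simp add: refls_def aff_refl_eq_reflection)

lemma hyps_eq: "hyps \<Phi> = {hplane \<beta> (of_int k) | \<beta> k. \<beta> \<in> \<Phi>}"
  by (simp add: hyps_def hplane_def)

lemma refls_in_affW: "r \<in> refls \<Phi> \<Longrightarrow> r \<in> affW \<Phi>"
  using affW.affW_step[OF _ affW.affW_id] by fastforce

lemma affW_comp: "w1 \<in> affW \<Phi> \<Longrightarrow> w2 \<in> affW \<Phi> \<Longrightarrow> w1 \<circ> w2 \<in> affW \<Phi>"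
  by (induction rule: affW.induct) (auto, metis affW.affW_step comp_assoc)

locale affine_weyl =
  fixes \<Phi> :: "'a::euclidean_space set"
  assumes root_system: "root_system \<Phi>"
begin

lemma finite_roots: "finite \<Phi>"
  using root_system by (simp add: root_system_def)

lemma reflsE:
  assumes "r \<in> refls \<Phi>"
  obtains \<beta> k where "\<beta> \<in> \<Phi>" "\<beta> \<noteq> 0" "r = reflection \<beta> (of_int k)"
  using assms root_system by (auto simp: refls_eq root_system_def)

lemma hypsE:
  assumes "H \<in> hyps \<Phi>"
  obtains \<beta> k where "\<beta> \<in> \<Phi>" "\<beta> \<noteq> 0" "H = hplane \<beta> (of_int k)"
  using assms root_system by (auto simp: hyps_eq root_system_def)

lemma refls_involution: "r \<in> refls \<Phi> \<Longrightarrow> r \<circ> r = id"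
  by (erule reflsE) (simp add: fun_eq_iff reflection_involution)

lemma refls_bij: "r \<in> refls \<Phi> \<Longrightarrow> bij r"
  by (metis o_bij refls_involution)

lemma refls_inv: "r \<in> refls \<Phi> \<Longrightarrow> inv r = r"
  by (metis inv_unique_comp refls_involution)

lemma refls_eqI:
  assumes r: "r \<in> refls \<Phi>" and q: "q \<in> refls \<Phi>" and eq: "fixH r = fixH q"
  shows "r = q"
proof -
  obtain \<beta> k where \<beta>: "\<beta> \<noteq> 0" "r = reflection \<beta> (of_int k)" using r by (rule reflsE)
  obtain \<gamma> m where \<gamma>: "\<gamma> \<noteq> 0" "q = reflection \<gamma> (of_int m)" using q by (rule reflsE)
  have "hplane \<gamma> (of_int m) = hplane \<beta> (of_int k)" using eq \<beta> \<gamma> by (simp add: fixH_reflection)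
  then obtain c where "c \<noteq> 0" "\<gamma> = c *\<^sub>R \<beta>" "of_int m = c * of_int k"
    using hplane_eq_imp_parallel \<beta>(1) \<gamma>(1) by blast
  then show ?thesis using \<beta> \<gamma> by (simp add: reflection_scaleR)
qed

lemma refls_conj:
  assumes r: "r \<in> refls \<Phi>" and q: "q \<in> refls \<Phi>"
  shows "r \<circ> q \<circ> r \<in> refls \<Phi>"
proof -
  obtain \<alpha> m where \<alpha>: "\<alpha> \<in> \<Phi>" "\<alpha> \<noteq> 0" "r = reflection \<alpha> (of_int m)" using r by (rule reflsE)
  obtain \<beta> k where \<beta>: "\<beta> \<in> \<Phi>" "\<beta> \<noteq> 0" "q = reflection \<beta> (of_int k)" using q by (rule reflsE)
  define c where "c = 2 * (\<beta> \<bullet> \<alpha>) / (\<alpha> \<bullet> \<alpha>)"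
  have "c \<in> \<int>" "\<beta> - c *\<^sub>R \<alpha> \<in> \<Phi>"
    using root_system \<alpha>(1) \<beta>(1) by (simp_all add: root_system_def c_def)
  then obtain n where n: "c = of_int n" "\<beta> - c *\<^sub>R \<alpha> \<in> \<Phi>" by (auto elim: Ints_cases)
  have "r \<circ> q \<circ> r = reflection (\<beta> - c *\<^sub>R \<alpha>) (of_int k - c * of_int m)"
    using reflection_conj[OF \<alpha>(2) \<beta>(2)] \<alpha>(3) \<beta>(3) by (simp add: fun_eq_iff c_def)
  also have "\<dots> = reflection (\<beta> - c *\<^sub>R \<alpha>) (of_int (k - n * m))"
    using n(1) by simp
  finally show ?thesis using n(2) unfolding refls_eq by blast
qed

lemma affW_bij: "w \<in> affW \<Phi> \<Longrightarrow> bij w"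
proof (induction rule: affW.induct)
  case (affW_step r w)
  then show ?case using bij_comp refls_bij by blast
qed (simp flip: id_def)

lemma inv_comp_refls: "w \<in> affW \<Phi> \<Longrightarrow> r \<in> refls \<Phi> \<Longrightarrow> inv (r \<circ> w) = inv w \<circ> r"
  by (simp add: o_inv_distrib affW_bij refls_bij refls_inv)

lemma affW_inv: "w \<in> affW \<Phi> \<Longrightarrow> inv w \<in> affW \<Phi>"
proof (induction rule: affW.induct)
  case (affW_step r w)
  then show ?case
    using inv_comp_refls[of w r] affW_comp[of "inv w" _ r] refls_in_affW[of r] by (simp add: comp_def)
qed (metis affW.affW_id id_def inv_id)

lemma affW_conj:
  assumes "q \<in> refls \<Phi>"
  shows "w \<in> affW \<Phi> \<Longrightarrow> w \<circ> q \<circ> inv w \<in> refls \<Phi>"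
proof (induction rule: affW.induct)
  case (affW_step r w)
  then have "r \<circ> w \<circ> q \<circ> inv (r \<circ> w) = r \<circ> (w \<circ> q \<circ> inv w) \<circ> r"
    by (simp add: inv_comp_refls o_assoc)
  then show ?case using affW_step refls_conj by metis
qed (simp add: assms inv_id)

lemma fixH_in_hyps: "r \<in> refls \<Phi> \<Longrightarrow> fixH r \<in> hyps \<Phi>"
  by (erule reflsE) (auto simp: fixH_reflection hyps_eq)

lemma hyps_obtain_refl:
  assumes "H \<in> hyps \<Phi>"
  obtains r where "r \<in> refls \<Phi>" "fixH r = H"
proof -
  obtain \<beta> k where "\<beta> \<in> \<Phi>" "\<beta> \<noteq> 0" "H = hplane \<beta> (of_int k)" using assms by (rule hypsE)
  then show thesis
    using that[of "reflection \<beta> (of_int k)"] by (auto simp: fixH_reflection refls_eq)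
qed

lemma affW_image_hyps: "w \<in> affW \<Phi> \<Longrightarrow> H \<in> hyps \<Phi> \<Longrightarrow> w ` H \<in> hyps \<Phi>"
  by (metis affW_bij affW_conj fixH_conj fixH_in_hyps hyps_obtain_refl)

lemma affW_affine_map: "w \<in> affW \<Phi> \<Longrightarrow> affine_map w"
proof (induction rule: affW.induct)
  case (affW_step r w)
  then show ?case by (metis reflsE affine_map_comp affine_map_reflection)
qed (metis affine_map_id id_def)

lemma refls_parallel_translation:
  assumes r1: "r1 \<in> refls \<Phi>" and r2: "r2 \<in> refls \<Phi>" and par: "fixH r2 = (\<lambda>v. t + v) ` fixH r1"
  obtains d where "r2 \<circ> r1 = (\<lambda>v. v + d)"
proof -
  obtain \<beta> k where \<beta>: "\<beta> \<noteq> 0" "r1 = reflection \<beta> (of_int k)" using r1 by (rule reflsE)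
  obtain \<gamma> m where \<gamma>: "\<gamma> \<noteq> 0" "r2 = reflection \<gamma> (of_int m)" using r2 by (rule reflsE)
  have "hplane \<gamma> (of_int m) = (\<lambda>v. v + t) ` hplane \<beta> (of_int k)"
    using par \<beta> \<gamma> by (simp add: fixH_reflection add.commute)
  also have "\<dots> = hplane \<beta> (of_int k + t \<bullet> \<beta>)" by (rule translation_hplane)
  finally obtain c where "c \<noteq> 0" "\<gamma> = c *\<^sub>R \<beta>" "of_int m = c * (of_int k + t \<bullet> \<beta>)"
    using hplane_eq_imp_parallel[OF \<beta>(1) \<gamma>(1)] by blast
  then have "r2 = reflection \<beta> (of_int k + t \<bullet> \<beta>)" using \<gamma>(2) by (simp add: reflection_scaleR)
  then have "r2 \<circ> r1 = (\<lambda>v. v + ((t \<bullet> \<beta>) * (2 / (\<beta> \<bullet> \<beta>))) *\<^sub>R \<beta>)"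
    using \<beta> by (simp add: fun_eq_iff reflection_reflection)
  then show thesis by (rule that)
qed

lemma hyps_affine: "H \<in> hyps \<Phi> \<Longrightarrow> affine H"
  by (metis affine_hplane hypsE)

lemma hyps_aff_dim: "H \<in> hyps \<Phi> \<Longrightarrow> aff_dim H = int DIM('a) - 1"
  by (metis aff_dim_hplane hypsE)

lemma hyps_nonempty: "H \<in> hyps \<Phi> \<Longrightarrow> H \<noteq> {}"
  by (metis hplane_nonempty hypsE)

lemma aff_dim_Int_hyps_less:
  assumes H: "H \<in> hyps \<Phi>" and H': "H' \<in> hyps \<Phi>" and "H' \<noteq> H"
  shows "aff_dim (H \<inter> H') < int DIM('a) - 1"
proof -
  have "\<not> H \<subseteq> H'"
    using assms affine_dim_equal[OF hyps_affine[OF H] hyps_affine[OF H'] hyps_nonempty[OF H]]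
    by (auto simp: hyps_aff_dim)
  then have "H \<inter> H' \<subset> H" by blast
  moreover have "affine hull (H \<inter> H') = H \<inter> H'" "affine hull H = H"
    using hyps_affine[OF H] hyps_affine[OF H'] by (simp_all add: affine_Int affine_hull_eq)
  ultimately have "aff_dim (H \<inter> H') < aff_dim H" by (metis aff_dim_psubset)
  then show ?thesis using hyps_aff_dim[OF H] by simp
qed

lemma wallI:
  assumes "H \<in> hyps \<Phi>" and "aff_dim (closure A \<inter> H) \<ge> int DIM('a) - 1"
  shows "wall A H"
  using assms aff_dim_subset[of "closure A \<inter> H" H] hyps_aff_dim
  unfolding wall_def by fastforce

lemma countable_hyps: "countable (hyps \<Phi>)"
proof -
  have "hyps \<Phi> = (\<lambda>(\<beta>, k). hplane \<beta> (of_int k)) ` (\<Phi> \<times> UNIV)"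
    by (auto simp: hyps_eq)
  then show ?thesis using finite_roots by (simp add: countable_finite)
qed

lemma finite_hyps_between:
  "finite {H \<in> hyps \<Phi>. closed_segment x y \<inter> H \<noteq> {}}"
proof -
  define B where "B = (\<lambda>\<beta>. {k::int. \<bar>real_of_int k\<bar> \<le> \<bar>x \<bullet> \<beta>\<bar> + \<bar>y \<bullet> \<beta>\<bar>})"
  have "finite (B \<beta>)" for \<beta>
  proof -
    have "B \<beta> \<subseteq> {- \<lceil>\<bar>x \<bullet> \<beta>\<bar> + \<bar>y \<bullet> \<beta>\<bar>\<rceil> .. \<lceil>\<bar>x \<bullet> \<beta>\<bar> + \<bar>y \<bullet> \<beta>\<bar>\<rceil>}"
      by (auto simp: B_def abs_le_iff) linarith+
    then show ?thesis by (rule finite_subset) simp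
  qed
  then have fin: "finite (SIGMA \<beta>:\<Phi>. B \<beta>)" using finite_roots by auto
  have "{H \<in> hyps \<Phi>. closed_segment x y \<inter> H \<noteq> {}}
      \<subseteq> (\<lambda>(\<beta>, k). hplane \<beta> (of_int k)) ` (SIGMA \<beta>:\<Phi>. B \<beta>)"
  proof
    fix H assume "H \<in> {H \<in> hyps \<Phi>. closed_segment x y \<inter> H \<noteq> {}}"
    then obtain \<beta> k z where \<beta>: "\<beta> \<in> \<Phi>" "H = hplane \<beta> (of_int k)"
      and z: "z \<in> closed_segment x y" "z \<in> H"
      by (auto simp: hyps_eq)
    obtain u where u: "0 \<le> u" "u \<le> 1" "z = (1 - u) *\<^sub>R x + u *\<^sub>R y"
      using z(1) by (auto simp: in_segment)
    have "\<bar>z \<bullet> \<beta>\<bar> \<le> (1 - u) * \<bar>x \<bullet> \<beta>\<bar> + u * \<bar>y \<bullet> \<beta>\<bar>"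
      using u by (simp add: inner_add_left abs_triangle_ineq[THEN order_trans] abs_mult)
    also have "\<dots> \<le> \<bar>x \<bullet> \<beta>\<bar> + \<bar>y \<bullet> \<beta>\<bar>"
      using u by (intro add_mono mult_left_le_one_le) auto
    finally have "k \<in> B \<beta>" using z(2) \<beta>(2) by (simp add: B_def hplane_def)
    then show "H \<in> (\<lambda>(\<beta>, k). hplane \<beta> (of_int k)) ` (SIGMA \<beta>:\<Phi>. B \<beta>)" using \<beta> by force
  qed
  then show ?thesis using fin by (meson finite_imageI finite_subset)
qed

lemma closed_Union_hyps: "closed (\<Union>{H \<in> hyps \<Phi>. P H})"
proof -
  define K where "K = (\<lambda>\<beta>. {(of_int k :: real) | k. P (hplane \<beta> (of_int k))})"
  have eq: "\<Union>{H \<in> hyps \<Phi>. P H} = (\<Union>\<beta>\<in>\<Phi>. (\<lambda>v. v \<bullet> \<beta>) -` K \<beta>)"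
    unfolding K_def hyps_eq by (auto simp: hplane_def)
  have "closed ((\<lambda>v. v \<bullet> \<beta>) -` K \<beta>)" for \<beta>
  proof (rule continuous_closed_vimage)
    show "closed (K \<beta>)" unfolding K_def by (rule closed_subset_Ints) auto
  qed (intro continuous_intros)
  then show ?thesis unfolding eq using finite_roots by (intro closed_UN) auto
qed

section \<open>Alcoves and their walls\<close>

definition regular :: "'a set" where
  "regular = - \<Union>(hyps \<Phi>)"

abbreviation alcove_of :: "'a \<Rightarrow> 'a set" where
  "alcove_of a \<equiv> connected_component_set regular a"

lemma regular_iff: "v \<in> regular \<longleftrightarrow> (\<forall>H\<in>hyps \<Phi>. v \<notin> H)"
  by (auto simp: regular_def)

lemma open_alcove_of: "open (alcove_of a)"
  using closed_Union_hyps[of "\<lambda>_. True"]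
  by (intro open_connected_component) (simp add: regular_def open_Compl)

lemma alcove_of_regular: "b \<in> alcove_of a \<Longrightarrow> b \<in> regular"
  using connected_component_subset by blast

lemma alcove_of_self: "a \<in> regular \<Longrightarrow> a \<in> alcove_of a"
  by (simp add: connected_component_refl_eq)

lemma separates_xor:
  assumes "H \<in> hyps \<Phi>" and "a \<notin> H" "b \<notin> H" "c \<notin> H"
  shows "separates H a c \<longleftrightarrow> separates H a b \<noteq> separates H b c"
proof -
  obtain \<beta> k where H: "H = hplane \<beta> (of_int k)" using assms(1) by (rule hypsE)
  show ?thesis
    using separates_hplane_iff[of a \<beta> "of_int k" c] separates_hplane_iff[of a \<beta> "of_int k" b]
      separates_hplane_iff[of b \<beta> "of_int k" c] assms(2-) unfolding H by blast
qed

lemma alcove_of_not_separates: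
  assumes H: "H \<in> hyps \<Phi>" and b: "b \<in> alcove_of a"
  shows "\<not> separates H a b"
proof -
  obtain \<beta> k where H_eq: "H = hplane \<beta> (of_int k)" using H by (rule hypsE)
  have a: "a \<in> alcove_of a" using b alcove_of_self connected_component_in by fastforce
  have disj: "alcove_of a \<inter> hplane \<beta> (of_int k) = {}"
    using connected_component_subset[of regular a] H H_eq by (auto simp: regular_def)
  have "(\<forall>x\<in>alcove_of a. x \<bullet> \<beta> < of_int k) \<or> (\<forall>x\<in>alcove_of a. x \<bullet> \<beta> > of_int k)"
    by (rule connected_hplane_side[OF connected_connected_component disj])
  then have "(a \<bullet> \<beta> < of_int k) = (b \<bullet> \<beta> < of_int k)"
    using a b by (metis less_asym)
  moreover have "a \<notin> H" "b \<notin> H" using a b disj H_eq by blast+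
  ultimately show ?thesis unfolding H_eq by (simp add: separates_hplane_iff)
qed

lemma alcove_ofI:
  assumes a: "a \<in> regular" and b: "b \<in> regular" and no_sep: "\<forall>H\<in>hyps \<Phi>. \<not> separates H a b"
  shows "b \<in> alcove_of a"
proof -
  have "closed_segment a b \<inter> H = {}" if "H \<in> hyps \<Phi>" for H
    using a b no_sep that by (auto simp: regular_iff separates_def)
  then have "closed_segment a b \<subseteq> regular"
    unfolding regular_def by blast
  then have "closed_segment a b \<subseteq> alcove_of a"
    by (intro connected_component_maximal) (auto simp: convex_connected)
  then show ?thesis by auto
qed

lemma affW_regular:
  assumes w: "w \<in> affW \<Phi>" and v: "v \<in> regular"
  shows "w v \<in> regular"
proof -
  have "v \<notin> inv w ` H" if "H \<in> hyps \<Phi>" for H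
    using v that affW_image_hyps[OF affW_inv[OF w]] by (auto simp: regular_iff)
  moreover have "inv w (w v) = v" using affW_bij[OF w] by (simp add: bij_is_inj)
  ultimately show ?thesis by (metis image_eqI regular_iff)
qed

lemma separates_affW_image:
  assumes w: "w \<in> affW \<Phi>"
  shows "separates (w ` H) (w u) (w v) \<longleftrightarrow> separates H u v"
proof -
  have inj: "inj w" using affW_bij[OF w] bij_is_inj by blast
  have "closed_segment (w u) (w v) \<inter> w ` H = w ` (closed_segment u v \<inter> H)"
    using affine_map_closed_segment[OF affW_affine_map[OF w]] inj by (simp add: image_Int)
  then show ?thesis unfolding separates_def using inj by (auto simp: inj_image_mem_iff)
qed

lemma affW_image_alcove_of_subset:
  assumes w: "w \<in> affW \<Phi>" and a: "a \<in> regular"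
  shows "w ` alcove_of a \<subseteq> alcove_of (w a)"
proof (rule connected_component_maximal)
  show "w a \<in> w ` alcove_of a" using a by (simp add: alcove_of_self)
  show "connected (w ` alcove_of a)"
    using affine_map_continuous_on[OF affW_affine_map[OF w]]
    by (intro connected_continuous_image) auto
  show "w ` alcove_of a \<subseteq> regular"
    using alcove_of_regular affW_regular[OF w] by blast
qed

lemma affW_image_alcove_of:
  assumes w: "w \<in> affW \<Phi>" and a: "a \<in> regular"
  shows "w ` alcove_of a = alcove_of (w a)"
proof
  have "inv w ` alcove_of (w a) \<subseteq> alcove_of (inv w (w a))"
    using affW_image_alcove_of_subset[OF affW_inv[OF w] affW_regular[OF w a]] .
  also have "inv w (w a) = a" using affW_bij[OF w] by (simp add: bij_is_inj)
  finally have "w ` inv w ` alcove_of (w a) \<subseteq> w ` alcove_of a" by blast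
  then show "alcove_of (w a) \<subseteq> w ` alcove_of a"
    using affW_bij[OF w] by (simp add: image_image bij_is_surj surj_f_inv_f)
qed (rule affW_image_alcove_of_subset[OF w a])

lemma affW_image_closure_alcove_of:
  assumes "w \<in> affW \<Phi>" and "a \<in> regular"
  shows "w ` closure (alcove_of a) \<subseteq> closure (alcove_of (w a))"
  using affine_map_closure_image[OF affW_affine_map[OF assms(1)], of "alcove_of a"]
  by (simp add: affW_image_alcove_of[OF assms])

lemma separates_reflection:
  assumes t: "t \<in> refls \<Phi>" and a: "a \<notin> fixH t"
  shows "separates (fixH t) a (t a)"
proof -
  obtain \<beta> k where \<beta>: "\<beta> \<noteq> 0" "t = reflection \<beta> (of_int k)" using t by (rule reflsE)
  then have H: "fixH t = hplane \<beta> (of_int k)" by (simp add: fixH_reflection)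
  have "t a \<bullet> \<beta> = 2 * of_int k - a \<bullet> \<beta>" using \<beta> by (simp add: inner_reflection)
  moreover have "a \<bullet> \<beta> \<noteq> of_int k" using a H by (simp add: hplane_def)
  ultimately show ?thesis
    using a unfolding H by (subst separates_hplane_iff) (auto simp: hplane_def)
qed

lemma wall_affW_image:
  assumes w: "w \<in> affW \<Phi>" and a: "a \<in> regular" and H: "H \<in> hyps \<Phi>"
    and wall: "wall (alcove_of a) H"
  shows "wall (alcove_of (w a)) (w ` H)"
proof (rule wallI)
  show "w ` H \<in> hyps \<Phi>" using affW_image_hyps[OF w H] .
  have "w ` (closure (alcove_of a) \<inter> H) \<subseteq> closure (alcove_of (w a)) \<inter> w ` H"
    using affW_image_closure_alcove_of[OF w a] by (meson image_Int_subset Int_mono order_trans subset_refl)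
  then have "aff_dim (w ` (closure (alcove_of a) \<inter> H)) \<le> aff_dim (closure (alcove_of (w a)) \<inter> w ` H)"
    by (rule aff_dim_subset)
  then show "aff_dim (closure (alcove_of (w a)) \<inter> w ` H) \<ge> int DIM('a) - 1"
    using wall affine_map_aff_dim[OF affW_affine_map[OF w]] by (simp add: wall_def)
qed

lemma image_fixH: "t ` fixH t = fixH t"
proof -
  have "t ` fixH t = id ` fixH t" by (rule image_cong) (simp_all add: fixH_def)
  then show ?thesis by simp
qed

lemma wall_reflection:
  assumes "t \<in> refls \<Phi>" and "a \<in> regular" and "wall (alcove_of a) (fixH t)"
  shows "wall (alcove_of (t a)) (fixH t)"
  using wall_affW_image[OF refls_in_affW[OF assms(1)] assms(2) fixH_in_hyps[OF assms(1)] assms(3)]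
  by (simp add: image_fixH)

lemma separates_reflection_wall_iff:
  assumes a: "a \<in> regular" and t: "t \<in> refls \<Phi>" and wall: "wall (alcove_of a) (fixH t)"
    and H: "H \<in> hyps \<Phi>"
  shows "separates H a (t a) \<longleftrightarrow> H = fixH t"
proof
  assume "H = fixH t"
  then show "separates H a (t a)"
    using separates_reflection[OF t] a fixH_in_hyps[OF t] by (meson regular_iff)
next
  assume sep: "separates H a (t a)"
  obtain \<gamma> m where H_eq: "H = hplane \<gamma> (of_int m)" using H by (rule hypsE)
  have ta: "t a \<in> regular" using affW_regular[OF refls_in_affW[OF t] a] .
  have nH: "a \<notin> H" "t a \<notin> H" using a ta H by (meson regular_iff)+
  then have a_side: "a \<bullet> \<gamma> \<noteq> of_int m" "t a \<bullet> \<gamma> \<noteq> of_int m"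
    unfolding H_eq by (simp_all add: hplane_def)
  have sides: "(a \<bullet> \<gamma> < of_int m) \<noteq> (t a \<bullet> \<gamma> < of_int m)"
    using sep nH unfolding H_eq by (simp add: separates_hplane_iff)
  have disj: "alcove_of b \<inter> hplane \<gamma> (of_int m) = {}" for b
    using connected_component_subset[of regular b] H H_eq by (auto simp: regular_def)
  note side_a = closure_hplane_side[OF connected_connected_component disj alcove_of_self[OF a]]
  note side_ta = closure_hplane_side[OF connected_connected_component disj alcove_of_self[OF ta]]
  have "closure (alcove_of a) \<inter> fixH t \<subseteq> fixH t \<inter> H"
  proof
    fix f assume f: "f \<in> closure (alcove_of a) \<inter> fixH t"
    then have "t f = f" by (simp add: fixH_def)
    then have "f \<in> closure (alcove_of (t a))"
      using affW_image_closure_alcove_of[OF refls_in_affW[OF t] a] f by (metis IntD1 image_subset_iff)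
    then have "f \<bullet> \<gamma> = of_int m"
      using side_a[of f] side_ta[of f] f a_side sides by (cases "a \<bullet> \<gamma> < of_int m") auto
    then show "f \<in> fixH t \<inter> H" using f H_eq by (simp add: hplane_def)
  qed
  then have "aff_dim (fixH t \<inter> H) \<ge> int DIM('a) - 1"
    using aff_dim_subset wall unfolding wall_def by metis
  then show "H = fixH t"
    using aff_dim_Int_hyps_less[OF fixH_in_hyps[OF t] H] by fastforce
qed

lemma wall_of_alcove_near_point:
  assumes H: "H \<in> hyps \<Phi>" and p: "p \<in> H" and \<epsilon>: "\<epsilon> > 0"
    and isolated: "ball p \<epsilon> \<subseteq> - \<Union>{H' \<in> hyps \<Phi>. H' \<noteq> H}"
    and q: "q \<in> ball p \<epsilon>" "q \<notin> H"
  shows "wall (alcove_of q) H"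
proof -
  obtain \<beta> k where \<beta>: "\<beta> \<noteq> 0" "H = hplane \<beta> (of_int k)" using H by (rule hypsE)
  define \<sigma> :: real where "\<sigma> = (if q \<bullet> \<beta> > of_int k then 1 else -1)"
  define B where "B = ball p \<epsilon> \<inter> {x. (\<sigma> *\<^sub>R \<beta>) \<bullet> x > \<sigma> * of_int k}"
  have "q \<bullet> \<beta> \<noteq> of_int k" using q \<beta> by (simp add: hplane_def)
  then have "\<sigma> * of_int k < \<sigma> * (q \<bullet> \<beta>)" by (auto simp: \<sigma>_def)
  then have "q \<in> B" using q(1) by (simp add: B_def inner_commute)
  moreover have "B \<subseteq> regular"
  proof
    fix x assume x: "x \<in> B"
    then have "x \<notin> H" using \<beta>(2) by (auto simp: B_def hplane_def inner_commute)
    then show "x \<in> regular" using x isolated unfolding B_def regular_def by blast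
  qed
  moreover have "convex B" unfolding B_def by (intro convex_Int convex_ball convex_halfspace_gt)
  ultimately have B_sub: "B \<subseteq> alcove_of q"
    by (intro connected_component_maximal) (auto simp: convex_connected)
  have "H \<subseteq> {x. (\<sigma> *\<^sub>R \<beta>) \<bullet> x = \<sigma> * of_int k}"
    using \<beta>(2) by (auto simp: hplane_def inner_commute)
  moreover have "\<sigma> *\<^sub>R \<beta> \<noteq> 0" using \<beta>(1) by (simp add: \<sigma>_def)
  ultimately have "H \<inter> ball p \<epsilon> \<subseteq> closure B"
    using closure_halfspace_Int_ball[of "\<sigma> *\<^sub>R \<beta>" "\<sigma> * of_int k" p \<epsilon>] unfolding B_def by blast
  then have sub: "H \<inter> ball p \<epsilon> \<subseteq> closure (alcove_of q) \<inter> H"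
    using B_sub by (meson closure_mono Int_greatest Int_lower1 order_trans)
  have "aff_dim (H \<inter> ball p \<epsilon>) = aff_dim H"
    using hyps_affine[OF H] p \<epsilon> by (intro aff_dim_convex_Int_open) (auto simp: affine_imp_convex)
  then have "aff_dim H \<le> aff_dim (closure (alcove_of q) \<inter> H)"
    using aff_dim_subset[OF sub] by simp
  then show "wall (alcove_of q) H" using wallI[OF H] hyps_aff_dim[OF H] by simp
qed

lemma wall_near_point:
  assumes H: "H \<in> hyps \<Phi>" and p: "p \<in> H" and only: "\<forall>H'\<in>hyps \<Phi>. p \<in> H' \<longrightarrow> H' = H"
  obtains \<epsilon> where "\<epsilon> > 0" "\<And>q. q \<in> ball p \<epsilon> \<Longrightarrow> q \<notin> H \<Longrightarrow> q \<in> regular \<and> wall (alcove_of q) H"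
proof -
  have "open (- \<Union>{H' \<in> hyps \<Phi>. H' \<noteq> H})" using closed_Union_hyps by (simp add: open_Compl)
  moreover have "p \<in> - \<Union>{H' \<in> hyps \<Phi>. H' \<noteq> H}" using only by blast
  ultimately obtain \<epsilon> where \<epsilon>: "\<epsilon> > 0" "ball p \<epsilon> \<subseteq> - \<Union>{H' \<in> hyps \<Phi>. H' \<noteq> H}"
    using open_contains_ball by blast
  have "q \<in> regular" if "q \<in> ball p \<epsilon>" "q \<notin> H" for q
    using \<epsilon>(2) that unfolding regular_def by blast
  then show thesis using that \<epsilon> wall_of_alcove_near_point[OF H p \<epsilon>] by blast
qed

(* Such a segment passes through the codimension-2 flat H \<inter> H', so a lies on the hyperplane
   spanned by a0 and that flat. *)
lemma negligible_segments_meeting_Int: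
  assumes H: "H \<in> hyps \<Phi>" and H': "H' \<in> hyps \<Phi>" and "H \<noteq> H'" and "a0 \<notin> H" "a0 \<notin> H'"
  shows "negligible {a. closed_segment a0 a \<inter> H \<inter> H' \<noteq> {}}"
proof -
  obtain \<beta> k where H_eq: "H = hplane \<beta> (of_int k)" using H by (rule hypsE)
  obtain \<gamma> m where H'_eq: "H' = hplane \<gamma> (of_int m)" using H' by (rule hypsE)
  define c1 where "c1 = a0 \<bullet> \<beta> - of_int k"
  define c2 where "c2 = a0 \<bullet> \<gamma> - of_int m"
  define f where "f = (\<lambda>v. c2 * (v \<bullet> \<beta> - of_int k) - c1 * (v \<bullet> \<gamma> - of_int m))"
  have c: "c1 \<noteq> 0" "c2 \<noteq> 0"
    using assms(4,5) by (simp_all add: H_eq H'_eq hplane_def c1_def c2_def)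
  have f_eq: "{v. f v = 0} = {v. (c2 *\<^sub>R \<beta> - c1 *\<^sub>R \<gamma>) \<bullet> v = c2 * of_int k - c1 * of_int m}"
    by (auto simp: f_def inner_diff_left inner_commute algebra_simps)
  have "c2 *\<^sub>R \<beta> - c1 *\<^sub>R \<gamma> \<noteq> 0"
  proof
    assume "c2 *\<^sub>R \<beta> - c1 *\<^sub>R \<gamma> = 0"
    then have lin: "c2 * (v \<bullet> \<beta>) = c1 * (v \<bullet> \<gamma>)" for v
      by (metis eq_iff_diff_eq_0 inner_commute inner_scaleR_right)
    have "c2 * of_int k = c1 * of_int m"
      using lin[of a0] by (simp add: c1_def c2_def algebra_simps)
    then have "H = H'"
      using lin c unfolding H_eq H'_eq hplane_def by (auto, metis mult_left_cancel)+
    then show False using \<open>H \<noteq> H'\<close> by simp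
  qed
  then have "negligible {v. f v = 0}" unfolding f_eq by (intro negligible_hyperplane) simp
  moreover have "f a = 0" if meet: "closed_segment a0 a \<inter> H \<inter> H' \<noteq> {}" for a
  proof -
    obtain z where z: "z \<in> closed_segment a0 a" "z \<in> H \<inter> H'" using meet by blast
    then obtain u where u: "0 \<le> u" "u \<le> 1" "z = (1 - u) *\<^sub>R a0 + u *\<^sub>R a"
      by (auto simp: in_segment)
    have "u \<noteq> 0" using u(3) z(2) assms(4) by auto
    moreover have "f z = (1 - u) * f a0 + u * f a"
      unfolding u(3) f_def by (simp add: inner_add_left algebra_simps)
    moreover have "f a0 = 0" by (simp add: f_def c1_def c2_def)
    moreover have "f z = 0" using z(2) by (simp add: f_def H_eq H'_eq hplane_def)
    ultimately show ?thesis by simp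
  qed
  ultimately show ?thesis by (metis (mono_tags, lifting) mem_Collect_eq negligible_subset subsetI)
qed

lemma generic_point:
  assumes a0: "a0 \<in> regular" and X: "open X" "X \<noteq> {}"
  obtains a where "a \<in> X"
    "\<And>H H'. H \<in> hyps \<Phi> \<Longrightarrow> H' \<in> hyps \<Phi> \<Longrightarrow> H \<noteq> H' \<Longrightarrow> closed_segment a0 a \<inter> H \<inter> H' = {}"
proof -
  define F where "F = (\<lambda>(H, H'). {a. closed_segment a0 a \<inter> H \<inter> H' \<noteq> {}})
    ` {(H, H') \<in> hyps \<Phi> \<times> hyps \<Phi>. H \<noteq> H'}"
  have "countable F"
    unfolding F_def using countable_hyps
    by (intro countable_image countable_subset[OF _ countable_SIGMA]) auto
  moreover have "negligible S" if "S \<in> F" for S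
    using that a0 by (auto simp: F_def regular_iff intro!: negligible_segments_meeting_Int)
  ultimately have "negligible (\<Union>F)" by (rule negligible_countable_Union)
  then have "\<not> X \<subseteq> \<Union>F" using open_not_negligible[OF X] negligible_subset by blast
  then obtain a where a: "a \<in> X" "a \<notin> \<Union>F" by blast
  have "closed_segment a0 a \<inter> H \<inter> H' = {}" if "H \<in> hyps \<Phi>" "H' \<in> hyps \<Phi>" "H \<noteq> H'" for H H'
    using a(2) that unfolding F_def by blast
  then show thesis using that a(1) by blast
qed

(* The hyperplane met first when walking from a towards a0 is a wall of the alcove of a;
   genericity of the segment ensures that only one hyperplane is met there. *)
lemma exists_separating_wall:
  assumes a0: "a0 \<in> regular" and a: "a \<in> regular"
    and generic: "\<And>H H'. H \<in> hyps \<Phi> \<Longrightarrow> H' \<in> hyps \<Phi> \<Longrightarrow> H \<noteq> H' \<Longrightarrow> closed_segment a0 a \<inter> H \<inter> H' = {}"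
    and sep: "\<exists>H\<in>hyps \<Phi>. separates H a0 a"
  obtains H where "H \<in> hyps \<Phi>" "separates H a0 a" "wall (alcove_of a) H"
proof -
  define P where "P = closed_segment a a0 \<inter> \<Union>(hyps \<Phi>)"
  have "closed P" unfolding P_def using closed_Union_hyps[of "\<lambda>_. True"] by (intro closed_Int) auto
  moreover have "P \<noteq> {}" using sep unfolding P_def separates_def by (auto simp: closed_segment_commute)
  ultimately obtain p where p: "p \<in> P" and nearest: "\<And>y. y \<in> P \<Longrightarrow> dist a p \<le> dist a y"
    using distance_attains_inf by blast
  obtain H where H: "H \<in> hyps \<Phi>" "p \<in> H" using p unfolding P_def by blast
  have p_seg: "p \<in> closed_segment a a0" using p unfolding P_def by blast
  have "\<forall>H'\<in>hyps \<Phi>. p \<in> H' \<longrightarrow> H' = H"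
    using generic H p_seg by (metis IntI closed_segment_commute empty_iff)
  then obtain \<epsilon> where \<epsilon>: "\<epsilon> > 0"
    and near: "\<And>q. q \<in> ball p \<epsilon> \<Longrightarrow> q \<notin> H \<Longrightarrow> q \<in> regular \<and> wall (alcove_of q) H"
    using wall_near_point[OF H] by blast
  have "a \<noteq> p" using a H by (auto simp: regular_iff)
  then obtain q where q_ball: "q \<in> ball p \<epsilon>" and "q \<in> closed_segment a p" and daq: "dist a q < dist a p"
    using closed_segment_near_end \<epsilon> by blast
  then have sub: "closed_segment a q \<subseteq> closed_segment a a0"
    using p_seg by (meson closed_segment_subset convex_closed_segment ends_in_segment(1) subset_trans)
  have "closed_segment a q \<subseteq> regular"
  proof
    fix y assume y: "y \<in> closed_segment a q"
    then have "dist a y < dist a p"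
      using dist_in_closed_segment[OF y] daq by (simp add: dist_commute)
    then have "y \<notin> P" using nearest by force
    then show "y \<in> regular" using sub y unfolding P_def regular_def by blast
  qed
  then have "closed_segment a q \<subseteq> alcove_of a"
    using a by (intro connected_component_maximal) (auto simp: convex_connected)
  then have "alcove_of q = alcove_of a" by (meson connected_component_eq ends_in_segment(2) subsetD)
  moreover have "q \<notin> H" using \<open>closed_segment a q \<subseteq> regular\<close> H by (auto simp: regular_iff)
  ultimately have "wall (alcove_of a) H" using near[OF q_ball] by simp
  moreover have "separates H a0 a"
    using a0 a H p_seg unfolding separates_def by (auto simp: regular_iff closed_segment_commute)
  ultimately show thesis using that H(1) by blast
qed

(* A generic segment from a0 into the alcove of t a0 crosses H = fixH t at a point lying
   on no other hyperplane. *)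
lemma hyps_wall:
  assumes a0: "a0 \<in> regular" and H: "H \<in> hyps \<Phi>"
  obtains q where "q \<in> regular" "wall (alcove_of q) H"
proof -
  obtain t where t: "t \<in> refls \<Phi>" "fixH t = H" using H by (rule hyps_obtain_refl)
  have ta0: "t a0 \<in> regular" using affW_regular[OF refls_in_affW[OF t(1)] a0] .
  obtain a where a: "a \<in> alcove_of (t a0)"
    and generic: "\<And>H H'. H \<in> hyps \<Phi> \<Longrightarrow> H' \<in> hyps \<Phi> \<Longrightarrow> H \<noteq> H' \<Longrightarrow> closed_segment a0 a \<inter> H \<inter> H' = {}"
    using generic_point[OF a0 open_alcove_of] alcove_of_self[OF ta0] by blast
  have "a \<in> regular" using a by (rule alcove_of_regular)
  then have "separates H a0 a"
    using separates_xor[OF H, of a0 "t a0" a] separates_reflection[OF t(1), of a0] t(2)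
      alcove_of_not_separates[OF H a] a0 ta0 H by (auto simp: regular_iff)
  then obtain p where p: "p \<in> closed_segment a0 a" "p \<in> H" unfolding separates_def by blast
  then have "\<forall>H'\<in>hyps \<Phi>. p \<in> H' \<longrightarrow> H' = H" using generic H by blast
  then obtain \<epsilon> where \<epsilon>: "\<epsilon> > 0"
    and near: "\<And>q. q \<in> ball p \<epsilon> \<Longrightarrow> q \<notin> H \<Longrightarrow> q \<in> regular \<and> wall (alcove_of q) H"
    using wall_near_point[OF H p(2)] by blast
  obtain \<beta> k where \<beta>: "\<beta> \<noteq> 0" "H = hplane \<beta> (of_int k)" using H by (rule hypsE)
  define q where "q = p + (\<epsilon> / (2 * norm \<beta>)) *\<^sub>R \<beta>"
  have "dist p q = \<epsilon> / 2" using \<beta> \<epsilon> by (simp add: q_def dist_norm)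
  then have "q \<in> ball p \<epsilon>" using \<epsilon> by simp
  moreover have "q \<bullet> \<beta> = of_int k + \<epsilon> * norm \<beta> / 2"
    using p(2) \<beta> by (simp add: q_def inner_add_left hplane_def power2_norm_eq_inner[symmetric]
        power2_eq_square)
  then have "q \<notin> H" using \<beta> \<epsilon> by (simp add: hplane_def)
  ultimately show thesis using near that by blast
qed

definition separating :: "'a \<Rightarrow> 'a \<Rightarrow> 'a set set" where
  "separating a b = {H \<in> hyps \<Phi>. separates H a b}"

lemma finite_separating: "finite (separating a b)"
  by (rule finite_subset[OF _ finite_hyps_between[of a b]]) (auto simp: separating_def separates_def)

lemma separating_alcove_of:
  assumes c: "c \<in> regular" and b: "b \<in> alcove_of a"
  shows "separating c b = separating c a"
proof -
  have "a \<in> regular" "b \<in> regular" using b alcove_of_regular connected_component_in by fastforce+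
  then have "separates H c b \<longleftrightarrow> separates H c a" if "H \<in> hyps \<Phi>" for H
    using separates_xor[OF that, of c a b] alcove_of_not_separates[OF that b] c that
    by (meson regular_iff)
  then show ?thesis by (auto simp: separating_def)
qed

end

section \<open>Length as the number of separating hyperplanes\<close>

locale affine_weyl_alcove = affine_weyl +
  fixes a0 :: 'a
  assumes a0: "a0 \<in> regular"
begin

abbreviation A0 :: "'a set" where
  "A0 \<equiv> alcove_of a0"

abbreviation S :: "('a \<Rightarrow> 'a) set" where
  "S \<equiv> simple_refls \<Phi> A0"

lemma simple_refls_iff: "s \<in> S \<longleftrightarrow> s \<in> refls \<Phi> \<and> wall A0 (fixH s)"
  by (simp add: simple_refls_def wall_def Int_commute)

lemma comp_list_affW: "set ss \<subseteq> S \<Longrightarrow> comp_list ss \<in> affW \<Phi>"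
proof (induction ss)
  case Nil
  then show ?case by (metis affW.affW_id comp_list_Nil)
next
  case (Cons s ss)
  then have "s \<in> refls \<Phi>" "comp_list ss \<in> affW \<Phi>" by (simp_all add: simple_refls_iff)
  then show ?case unfolding comp_list_Cons by (rule affW.affW_step)
qed

definition generated :: "('a \<Rightarrow> 'a) set" where
  "generated = {comp_list ss | ss. set ss \<subseteq> S}"

lemma generated_id: "id \<in> generated"
  unfolding generated_def by (auto intro!: exI[of _ "[]"])

lemma generated_comp:
  assumes "u \<in> generated" and "v \<in> generated"
  shows "u \<circ> v \<in> generated"
proof -
  obtain ss ss' where "set ss \<subseteq> S" "u = comp_list ss" "set ss' \<subseteq> S" "v = comp_list ss'"
    using assms by (auto simp: generated_def)
  then have "set (ss @ ss') \<subseteq> S" "u \<circ> v = comp_list (ss @ ss')" by (simp_all add: comp_list_append)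
  then show ?thesis unfolding generated_def by blast
qed

lemma simple_generated: "s \<in> S \<Longrightarrow> s \<in> generated"
  unfolding generated_def by (auto intro!: exI[of _ "[s]"])

lemma comp_list_rev_inv: "set ss \<subseteq> S \<Longrightarrow> comp_list (rev ss) \<circ> comp_list ss = id"
proof (induction ss)
  case (Cons s ss)
  then have involution: "s \<circ> s = id" by (simp add: refls_involution simple_refls_iff)
  have "comp_list (rev (s # ss)) \<circ> comp_list (s # ss) = comp_list (rev ss) \<circ> (s \<circ> s) \<circ> comp_list ss"
    by (simp add: comp_list_append comp_assoc)
  also have "\<dots> = comp_list (rev ss) \<circ> comp_list ss" by (simp add: involution)
  also have "\<dots> = id" by (rule Cons.IH) (use Cons.prems in simp)
  finally show ?case .
qed simp

lemma generated_inv: "u \<in> generated \<Longrightarrow> inv u \<in> generated"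
proof -
  assume "u \<in> generated"
  then obtain ss where ss: "set ss \<subseteq> S" "u = comp_list ss" by (auto simp: generated_def)
  have "inv u = comp_list (rev ss)"
    using comp_list_rev_inv[of ss] comp_list_rev_inv[of "rev ss"] ss by (simp add: inv_unique_comp)
  moreover have "set (rev ss) \<subseteq> S" using ss(1) by simp
  ultimately show ?thesis unfolding generated_def by blast
qed

lemma conj_wall_reflection_simple:
  assumes u: "u \<in> affW \<Phi>" and b: "u a0 \<in> alcove_of b"
    and t: "t \<in> refls \<Phi>" and wall: "wall (alcove_of b) (fixH t)"
  shows "inv u \<circ> t \<circ> u \<in> S"
proof -
  have inv_u: "inv u \<in> affW \<Phi>" "inv (inv u) = u" using affW_inv[OF u] affW_bij[OF u]
    by (simp_all add: inv_inv_eq)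
  have ua0: "u a0 \<in> regular" using affW_regular[OF u a0] .
  have "alcove_of b = alcove_of (u a0)" using b by (simp add: connected_component_eq)
  then have "wall (alcove_of (inv u (u a0))) (inv u ` fixH t)"
    using wall_affW_image[OF inv_u(1) ua0 fixH_in_hyps[OF t]] wall by simp
  moreover have "inv u (u a0) = a0" using affW_bij[OF u] by (simp add: bij_is_inj)
  moreover have "fixH (inv u \<circ> t \<circ> u) = inv u ` fixH t"
    using fixH_conj[OF affW_bij[OF inv_u(1)], of t] inv_u(2) by simp
  ultimately show ?thesis
    using affW_conj[OF t inv_u(1)] inv_u(2) by (simp add: simple_refls_iff)
qed

(* Reflecting a generic point of the alcove in its first separating wall removes exactly
   that hyperplane from the separating set. *)
lemma alcove_closer:
  assumes a: "a \<in> regular" and "separating a0 a \<noteq> {}"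
  obtains b t where "b \<in> regular" "t \<in> refls \<Phi>" "t b \<in> alcove_of a" "wall (alcove_of b) (fixH t)"
    "card (separating a0 b) < card (separating a0 a)"
proof -
  obtain a' where a': "a' \<in> alcove_of a"
    and generic: "\<And>H H'. H \<in> hyps \<Phi> \<Longrightarrow> H' \<in> hyps \<Phi> \<Longrightarrow> H \<noteq> H' \<Longrightarrow> closed_segment a0 a' \<inter> H \<inter> H' = {}"
    using generic_point[OF a0 open_alcove_of] alcove_of_self[OF a] by blast
  have a'_reg: "a' \<in> regular" using a' by (rule alcove_of_regular)
  have sep_a': "separating a0 a' = separating a0 a" using separating_alcove_of[OF a0 a'] .
  then obtain H where H: "H \<in> hyps \<Phi>" "separates H a0 a'" and wall: "wall (alcove_of a') H"
    using exists_separating_wall[OF a0 a'_reg generic] assms(2) by (auto simp: separating_def)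
  obtain t where t: "t \<in> refls \<Phi>" "fixH t = H" using H(1) by (rule hyps_obtain_refl)
  define b where "b = t a'"
  have b: "b \<in> regular" unfolding b_def using affW_regular[OF refls_in_affW[OF t(1)] a'_reg] .
  have "separating a0 b = separating a0 a' - {H}"
  proof -
    have "separates H' a0 b \<longleftrightarrow> separates H' a0 a' \<and> H' \<noteq> H" if H': "H' \<in> hyps \<Phi>" for H'
    proof -
      have "a0 \<notin> H'" "a' \<notin> H'" "b \<notin> H'" using a0 a'_reg b H' by (meson regular_iff)+
      then have "separates H' a0 b \<longleftrightarrow> separates H' a0 a' \<noteq> separates H' a' b"
        by (rule separates_xor[OF H'])
      also have "separates H' a' b \<longleftrightarrow> H' = H"
        unfolding b_def using separates_reflection_wall_iff[OF a'_reg t(1) _ H'] wall t(2) by simp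
      finally show ?thesis using H(2) by auto
    qed
    then show ?thesis by (auto simp: separating_def)
  qed
  also have "card (separating a0 a' - {H}) < card (separating a0 a')"
    using H by (intro card_Diff1_less finite_separating) (simp add: separating_def)
  finally have "card (separating a0 b) < card (separating a0 a)" by (simp only: sep_a')
  moreover have "t b \<in> alcove_of a"
    using fun_cong[OF refls_involution[OF t(1)], of a'] a' by (simp add: b_def)
  moreover have "wall (alcove_of b) (fixH t)"
    unfolding b_def using wall_reflection[OF t(1) a'_reg] wall t(2) by simp
  ultimately show thesis using that b t(1) by blast
qed

lemma alcove_reachable: "a \<in> regular \<Longrightarrow> \<exists>u\<in>generated. u a0 \<in> alcove_of a"
proof (induction "card (separating a0 a)" arbitrary: a rule: less_induct)
  case less
  show ?case
  proof (cases "separating a0 a = {}")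
    case True
    then have "a \<in> A0" using alcove_ofI[OF a0 less.prems] by (auto simp: separating_def)
    then have "id a0 \<in> alcove_of a" by (simp add: connected_component_sym)
    then show ?thesis using generated_id by blast
  next
    case False
    then obtain b t where b: "b \<in> regular" and t: "t \<in> refls \<Phi>" "t b \<in> alcove_of a"
      and wall: "wall (alcove_of b) (fixH t)" and less_card: "card (separating a0 b) < card (separating a0 a)"
      using alcove_closer[OF less.prems] by metis
    obtain u where u: "u \<in> generated" "u a0 \<in> alcove_of b" using less.hyps[OF less_card b] by blast
    have u_affW: "u \<in> affW \<Phi>" using u(1) comp_list_affW by (auto simp: generated_def)
    define s where "s = inv u \<circ> t \<circ> u"
    have "s \<in> S" unfolding s_def using conj_wall_reflection_simple[OF u_affW u(2) t(1) wall] .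
    then have "u \<circ> s \<in> generated" using generated_comp[OF u(1) simple_generated] by blast
    moreover have "(u \<circ> s) a0 = t (u a0)"
      using affW_bij[OF u_affW] by (simp add: s_def bij_is_surj surj_f_inv_f)
    moreover have "t (u a0) \<in> alcove_of (t b)"
      using affW_image_alcove_of[OF refls_in_affW[OF t(1)] b] u(2) by blast
    ultimately show ?thesis using t(2) by (metis connected_component_eq)
  qed
qed

lemma refls_generated:
  assumes t: "t \<in> refls \<Phi>"
  shows "t \<in> generated"
proof -
  obtain b where b: "b \<in> regular" "wall (alcove_of b) (fixH t)"
    using hyps_wall[OF a0 fixH_in_hyps[OF t]] by blast
  obtain u where u: "u \<in> generated" "u a0 \<in> alcove_of b" using alcove_reachable[OF b(1)] by blast
  have u_affW: "u \<in> affW \<Phi>" using u(1) comp_list_affW by (auto simp: generated_def)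
  have "inv u \<circ> t \<circ> u \<in> S" using conj_wall_reflection_simple[OF u_affW u(2) t b(2)] .
  then have "u \<circ> (inv u \<circ> t \<circ> u) \<circ> inv u \<in> generated"
    by (intro generated_comp u(1) generated_inv simple_generated)
  moreover have "u \<circ> (inv u \<circ> t \<circ> u) \<circ> inv u = t"
    using affW_bij[OF u_affW] by (simp add: fun_eq_iff bij_is_surj bij_is_inj surj_f_inv_f)
  ultimately show ?thesis by simp
qed

lemma affW_eq_comp_list:
  assumes "w \<in> affW \<Phi>"
  obtains ss where "set ss \<subseteq> S" "w = comp_list ss"
proof -
  from assms have "w \<in> generated"
  proof (induction rule: affW.induct)
    case affW_id
    then show ?case using generated_id by (simp add: id_def)
  next
    case (affW_step r w)
    then show ?case using generated_comp refls_generated by blast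
  qed
  then show thesis using that by (auto simp: generated_def)
qed

lemma separating_comp_simple:
  assumes w: "w \<in> affW \<Phi>" and s: "s \<in> S"
  shows "separating a0 (w (s a0)) =
    (if w ` fixH s \<in> separating a0 (w a0) then separating a0 (w a0) - {w ` fixH s}
     else insert (w ` fixH s) (separating a0 (w a0)))"
proof -
  have sR: "s \<in> refls \<Phi>" and wall: "wall A0 (fixH s)" using s by (simp_all add: simple_refls_iff)
  have H_s: "w ` fixH s \<in> hyps \<Phi>" using affW_image_hyps[OF w fixH_in_hyps[OF sR]] .
  have "separates H a0 (w (s a0)) \<longleftrightarrow> separates H a0 (w a0) \<noteq> (H = w ` fixH s)"
    if H: "H \<in> hyps \<Phi>" for H
  proof -
    define H' where "H' = inv w ` H"
    have H': "H' \<in> hyps \<Phi>" unfolding H'_def using affW_image_hyps[OF affW_inv[OF w] H] .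
    have H_eq: "H = w ` H'"
      unfolding H'_def using affW_bij[OF w] by (simp add: image_image bij_is_surj surj_f_inv_f)
    have "a0 \<notin> H" "w a0 \<notin> H" "w (s a0) \<notin> H"
      using a0 affW_regular[OF w a0] affW_regular[OF w affW_regular[OF refls_in_affW[OF sR] a0]] H
      by (meson regular_iff)+
    then have "separates H a0 (w (s a0)) \<longleftrightarrow> separates H a0 (w a0) \<noteq> separates H (w a0) (w (s a0))"
      by (rule separates_xor[OF H])
    also have "separates H (w a0) (w (s a0)) \<longleftrightarrow> separates H' a0 (s a0)"
      unfolding H_eq by (rule separates_affW_image[OF w])
    also have "\<dots> \<longleftrightarrow> H' = fixH s" using separates_reflection_wall_iff[OF a0 sR wall H'] .
    also have "\<dots> \<longleftrightarrow> H = w ` fixH s"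
      using H_eq affW_bij[OF w] by (metis bij_is_inj inj_image_eq_iff)
    finally show ?thesis .
  qed
  then show ?thesis using H_s by (auto simp: separating_def)
qed

(* The hyperplane crossed at step i of the gallery A0, s1 A0, s1 s2 A0, ... of the word
   ss = [s1, s2, ...]. *)
definition crossed :: "('a \<Rightarrow> 'a) list \<Rightarrow> nat \<Rightarrow> 'a set" where
  "crossed ss i = comp_list (take i ss) ` fixH (ss ! i)"

lemma crossed_snoc:
  "{crossed (ss @ [s]) i | i. i < length (ss @ [s])}
    = insert (comp_list ss ` fixH s) {crossed ss i | i. i < length ss}"
proof -
  have "crossed (ss @ [s]) i = crossed ss i" if "i < length ss" for i
    using that by (simp add: crossed_def nth_append)
  moreover have "crossed (ss @ [s]) (length ss) = comp_list ss ` fixH s" by (simp add: crossed_def)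
  ultimately show ?thesis by (auto simp: less_Suc_eq) metis
qed

(* If the last step crosses the hyperplane already crossed at step i, then the reflection in
   it is conjugate both to ss ! i and to s, and the two letters cancel. *)
lemma comp_list_exchange:
  assumes ss: "set ss \<subseteq> S" and s: "s \<in> S" and i: "i < length ss"
    and crossed: "comp_list ss ` fixH s = crossed ss i"
  shows "comp_list (ss @ [s]) = comp_list (take i ss @ drop (Suc i) ss)"
proof -
  define u where "u = comp_list (take i ss)"
  define v where "v = comp_list (drop (Suc i) ss)"
  define w where "w = comp_list ss"
  define t where "t = ss ! i"
  have si: "t \<in> refls \<Phi>" using ss nth_mem[OF i] simple_refls_iff unfolding t_def by blast
  have sR: "s \<in> refls \<Phi>" using s by (simp add: simple_refls_iff)
  have u: "u \<in> affW \<Phi>" and w: "w \<in> affW \<Phi>"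
    unfolding u_def w_def using ss by (auto intro!: comp_list_affW dest: in_set_takeD)
  have w_eq: "w = u \<circ> t \<circ> v"
    unfolding w_def u_def v_def t_def using id_take_nth_drop[OF i] comp_list_append
    by (metis append_Cons append_Nil comp_assoc comp_list_Cons)
  have "fixH (u \<circ> t \<circ> inv u) = fixH (w \<circ> s \<circ> inv w)"
    using crossed fixH_conj[OF affW_bij[OF u]] fixH_conj[OF affW_bij[OF w]]
    by (simp add: crossed_def u_def w_def t_def)
  then have conj_eq: "u \<circ> t \<circ> inv u = w \<circ> s \<circ> inv w"
    by (intro refls_eqI affW_conj si sR u w)
  have inv_u: "inv u (u y) = y" and inv_w: "inv w (w y) = y" for y
    using affW_bij[OF u] affW_bij[OF w] by (simp_all add: bij_is_inj)
  have t_t: "t (t y) = y" for y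
    using fun_cong[OF refls_involution[OF si]] by simp
  have "w \<circ> s = (w \<circ> s \<circ> inv w) \<circ> w" by (simp add: fun_eq_iff inv_w)
  also have "\<dots> = (u \<circ> t \<circ> inv u) \<circ> (u \<circ> t \<circ> v)"
    unfolding conj_eq[symmetric] by (simp only: w_eq)
  also have "\<dots> = u \<circ> v" by (simp add: fun_eq_iff inv_u t_t)
  finally show ?thesis
    by (simp add: comp_list_append u_def v_def w_def)
qed

definition reduced_word :: "('a \<Rightarrow> 'a) list \<Rightarrow> bool" where
  "reduced_word ss \<longleftrightarrow> set ss \<subseteq> S \<and>
     (\<forall>ss'. set ss' \<subseteq> S \<longrightarrow> comp_list ss' = comp_list ss \<longrightarrow> length ss \<le> length ss')"

lemma reduced_word_length_le:
  "reduced_word ss \<Longrightarrow> set ss' \<subseteq> S \<Longrightarrow> comp_list ss' = comp_list ss \<Longrightarrow> length ss \<le> length ss'"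
  by (simp add: reduced_word_def)

lemma reduced_word_butlast:
  assumes "reduced_word (ss @ [s])"
  shows "reduced_word ss"
  unfolding reduced_word_def
proof (intro conjI allI impI)
  show "set ss \<subseteq> S" using assms by (simp add: reduced_word_def)
  fix ss' assume "set ss' \<subseteq> S" "comp_list ss' = comp_list ss"
  then have "set (ss' @ [s]) \<subseteq> S" "comp_list (ss' @ [s]) = comp_list (ss @ [s])"
    using assms by (simp_all add: reduced_word_def comp_list_append)
  then have "length (ss @ [s]) \<le> length (ss' @ [s])" by (rule reduced_word_length_le[OF assms])
  then show "length ss \<le> length ss'" by simp
qed

lemma reduced_word_last_wall_new:
  assumes red: "reduced_word (ss @ [s])"
    and sep: "separating a0 (comp_list ss a0) = {crossed ss i | i. i < length ss}"
  shows "comp_list ss ` fixH s \<notin> separating a0 (comp_list ss a0)"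
proof
  assume "comp_list ss ` fixH s \<in> separating a0 (comp_list ss a0)"
  then obtain i where i: "i < length ss" "comp_list ss ` fixH s = crossed ss i" using sep by blast
  have ss: "set ss \<subseteq> S" and s: "s \<in> S" using red by (auto simp: reduced_word_def)
  have "comp_list (ss @ [s]) = comp_list (take i ss @ drop (Suc i) ss)"
    using comp_list_exchange[OF ss s i] .
  moreover have "set (take i ss @ drop (Suc i) ss) \<subseteq> S"
    using ss by (auto dest: in_set_takeD in_set_dropD)
  ultimately have "length (ss @ [s]) \<le> length (take i ss @ drop (Suc i) ss)"
    by (metis reduced_word_length_le[OF red])
  then show False using i(1) by simp
qed

lemma separating_reduced_word:
  assumes "reduced_word ss"
  shows "separating a0 (comp_list ss a0) = {crossed ss i | i. i < length ss}"
    and "card (separating a0 (comp_list ss a0)) = length ss"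
proof -
  have "separating a0 (comp_list ss a0) = {crossed ss i | i. i < length ss}
      \<and> card (separating a0 (comp_list ss a0)) = length ss"
    using assms
  proof (induction ss rule: rev_induct)
    case Nil
    then show ?case using a0 by (simp add: separating_def separates_def)
  next
    case (snoc s ss)
    define w where "w = comp_list ss"
    define H where "H = w ` fixH s"
    have ss: "set ss \<subseteq> S" and s: "s \<in> S" using snoc.prems by (auto simp: reduced_word_def)
    have IH: "separating a0 (w a0) = {crossed ss i | i. i < length ss}"
      "card (separating a0 (w a0)) = length ss"
      using snoc.IH[OF reduced_word_butlast[OF snoc.prems]] unfolding w_def by blast+
    have new: "H \<notin> separating a0 (w a0)"
      using reduced_word_last_wall_new[OF snoc.prems IH(1)[unfolded w_def]] by (simp add: H_def w_def)
    then have sep: "separating a0 (comp_list (ss @ [s]) a0) = insert H (separating a0 (w a0))"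
      using separating_comp_simple[OF comp_list_affW[OF ss] s]
      by (simp add: comp_list_append w_def H_def)
    have "card (separating a0 (comp_list (ss @ [s]) a0)) = Suc (card (separating a0 (w a0)))"
      using sep new finite_separating by simp
    then show ?case using sep IH crossed_snoc[of ss s] by (simp add: H_def w_def)
  qed
  then show "separating a0 (comp_list ss a0) = {crossed ss i | i. i < length ss}"
    and "card (separating a0 (comp_list ss a0)) = length ss" by blast+
qed

lemma coxeter_length_eq_card_separating:
  assumes w: "w \<in> affW \<Phi>"
  shows "coxeter_length S w = card (separating a0 (w a0))"
proof -
  let ?P = "\<lambda>n. \<exists>ss. length ss = n \<and> set ss \<subseteq> S \<and> w = comp_list ss"
  obtain ss where "set ss \<subseteq> S" "w = comp_list ss" using w by (rule affW_eq_comp_list)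
  then have "?P (length ss)" by blast
  then obtain ss0 where ss0: "length ss0 = (LEAST n. ?P n)" "set ss0 \<subseteq> S" "w = comp_list ss0"
    using LeastI_ex[of ?P] by blast
  have "reduced_word ss0"
    unfolding reduced_word_def using ss0 by (metis (mono_tags, lifting) Least_le)
  then show ?thesis
    using separating_reduced_word(2) ss0 by (simp add: coxeter_length_comp_list)
qed

lemma descent_iff_separates:
  assumes w: "w \<in> affW \<Phi>" and s: "s \<in> S"
  shows "coxeter_length S (w \<circ> s) < coxeter_length S w \<longleftrightarrow> separates (w ` fixH s) a0 (w a0)"
proof -
  let ?H = "w ` fixH s" and ?N = "separating a0 (w a0)"
  have sR: "s \<in> refls \<Phi>" using s by (simp add: simple_refls_iff)
  have "?H \<in> hyps \<Phi>" using affW_image_hyps[OF w fixH_in_hyps[OF sR]] .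
  then have sep_iff: "separates ?H a0 (w a0) \<longleftrightarrow> ?H \<in> ?N" by (simp add: separating_def)
  have len_ws: "coxeter_length S (w \<circ> s) = card (separating a0 (w (s a0)))"
    using coxeter_length_eq_card_separating[OF affW_comp[OF w refls_in_affW[OF sR]]] by simp
  have len_w: "coxeter_length S w = card ?N" by (rule coxeter_length_eq_card_separating[OF w])
  show ?thesis
  proof (cases "?H \<in> ?N")
    case True
    then have "card (?N - {?H}) < card ?N" by (intro card_Diff1_less finite_separating)
    then show ?thesis using True sep_iff len_ws len_w separating_comp_simple[OF w s] by simp
  next
    case False
    then have "card (insert ?H ?N) = Suc (card ?N)" using finite_separating by simp
    then show ?thesis using False sep_iff len_ws len_w separating_comp_simple[OF w s] by simp
  qed
qed

lemma separates_translation: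
  assumes H: "H \<in> hyps \<Phi>" and p: "p \<in> regular" and T: "T \<in> affW \<Phi>" "T = (\<lambda>v. v + d)"
    and sep: "separates H a0 p" and not_between: "\<not> A0 \<subseteq> strictly_between H (T ` H)"
  shows "separates (T ` H) a0 (T p)"
proof -
  have TH: "T ` H \<in> hyps \<Phi>" using affW_image_hyps[OF T(1) H] .
  obtain \<eta> e where \<eta>: "\<eta> \<noteq> 0" "H = hplane \<eta> (of_int e)" using H by (rule hypsE)
  define e' where "e' = of_int e + d \<bullet> \<eta>"
  have TH_eq: "T ` H = hplane \<eta> e'"
    unfolding T(2) \<eta>(2) e'_def by (rule translation_hplane)
  have hyps: "hplane \<eta> (of_int e) \<in> hyps \<Phi>" "hplane \<eta> e' \<in> hyps \<Phi>"
    using H TH unfolding TH_eq by (simp_all only: \<eta>(2))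
  have "p + d \<in> regular" using affW_regular[OF T(1) p] T(2) by simp
  then have not_in: "a0 \<notin> hplane \<eta> (of_int e)" "p \<notin> hplane \<eta> (of_int e)"
    "a0 \<notin> hplane \<eta> e'" "p + d \<notin> hplane \<eta> e'"
    using a0 p hyps by (meson regular_iff)+
  have "A0 \<inter> hplane \<eta> (of_int e) = {}" "A0 \<inter> hplane \<eta> e' = {}"
    using alcove_of_regular hyps by (meson disjoint_iff regular_iff)+
  moreover have "\<not> A0 \<subseteq> strictly_between (hplane \<eta> (of_int e)) (hplane \<eta> e')"
    using not_between unfolding TH_eq unfolding \<eta>(2) .
  ultimately have "a0 \<bullet> \<eta> < of_int e \<longleftrightarrow> a0 \<bullet> \<eta> < e'"
    by (intro same_side_if_not_strictly_between[OF \<eta>(1) connected_connected_component alcove_of_self[OF a0]])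
  moreover have "(a0 \<bullet> \<eta> < of_int e) \<noteq> (p \<bullet> \<eta> < of_int e)"
    using sep not_in(1,2) unfolding \<eta>(2) by (simp add: separates_hplane_iff)
  ultimately have "(a0 \<bullet> \<eta> < e') \<noteq> ((p + d) \<bullet> \<eta> < e')"
    by (simp add: e'_def inner_add_left)
  then show ?thesis
    using not_in(3,4) unfolding TH_eq unfolding T(2) by (simp add: separates_hplane_iff)
qed

end

theorem proposition4p9:
  fixes \<Phi> :: "'a::euclidean_space set" and A0 :: "'a set"
    and x r1 r2 s :: "'a \<Rightarrow> 'a"
  assumes "root_system \<Phi>"
    and "alcove \<Phi> A0"
    and "x \<in> affW \<Phi>"
    and "r1 \<in> refls \<Phi>" and "r2 \<in> refls \<Phi>"
    and "\<exists>t. fixH r2 = (\<lambda>v. t + v) ` fixH r1"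
    and "s \<in> simple_refls \<Phi> A0"
    and "coxeter_length (simple_refls \<Phi> A0) (x \<circ> s) < coxeter_length (simple_refls \<Phi> A0) x"
    and "\<not> A0 \<subseteq> strictly_between (fixH (x \<circ> s \<circ> inv x))
                                   (fixH (r2 \<circ> r1 \<circ> x \<circ> s \<circ> inv x \<circ> r1 \<circ> r2))"
  shows "coxeter_length (simple_refls \<Phi> A0) (r2 \<circ> r1 \<circ> x \<circ> s)
           < coxeter_length (simple_refls \<Phi> A0) (r2 \<circ> r1 \<circ> x)"
proof -
  interpret affine_weyl \<Phi> by unfold_locales (fact assms(1))
  obtain a0 where a0: "a0 \<in> regular" and A0_eq: "A0 = alcove_of a0"
    using assms(2) by (auto simp: alcove_def regular_def components_iff)
  interpret affine_weyl_alcove \<Phi> a0 by unfold_locales (fact a0)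
  obtain d where T: "r2 \<circ> r1 = (\<lambda>v. v + d)"
    using refls_parallel_translation assms(4-6) by metis
  have T_affW: "r2 \<circ> r1 \<in> affW \<Phi>" using assms(4,5) by (intro affW_comp refls_in_affW)
  have y: "r2 \<circ> r1 \<circ> x \<in> affW \<Phi>" using T_affW assms(3) by (rule affW_comp)
  have "fixH (x \<circ> s \<circ> inv x) = x ` fixH s"
    using affW_bij[OF assms(3)] by (rule fixH_conj)
  moreover have "inv (r2 \<circ> r1 \<circ> x) = inv x \<circ> r1 \<circ> r2"
    using assms(3-5) by (simp add: o_inv_distrib affW_bij refls_bij refls_inv bij_comp comp_assoc)
  then have "fixH (r2 \<circ> r1 \<circ> x \<circ> s \<circ> inv x \<circ> r1 \<circ> r2) = (r2 \<circ> r1) ` x ` fixH s"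
    using fixH_conj[OF affW_bij[OF y], of s] by (simp add: image_comp comp_assoc)
  moreover have "x ` fixH s \<in> hyps \<Phi>"
    using assms(7) A0_eq by (intro affW_image_hyps assms(3) fixH_in_hyps) (simp add: simple_refls_iff)
  ultimately have "separates ((r2 \<circ> r1) ` x ` fixH s) a0 ((r2 \<circ> r1) (x a0))"
    using separates_translation[OF _ affW_regular[OF assms(3) a0] T_affW T] assms(7-9)
      descent_iff_separates[OF assms(3)] A0_eq by simp
  then show ?thesis
    using descent_iff_separates[OF y] assms(7) A0_eq by (simp add: image_comp)
qed

end
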